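(* Let $N=((V\cup \{s\}, A),\tau)$ be an acyclic temporal network (no arc enters $s$) and let $k\in \mathbb{N}$ be such that $$\min\{k,|\rho_N^i(v)|\}\ge \min\{k,|\delta_N^i(v)|\} \quad \text{for all } i\in \mathbb{N} \text{ and all } v\in V.$$ Then there exist $k$ pairwise arc-disjoint $\tau$-respecting $s$-arborescences $T_1,\dots,T_k$ in $D=(V\cup\{s\},A)$ such that each vertex $v\in V$ belongs to exactly $\min\{k,d^-_A(v)\}$ of them.
   Context: A temporal network is a pair $N=(D,\tau)$ where $D=(V\cup\{s\},A)$ is a directed graph (parallel arcs allowed) with a root $s$ that no arc enters, and $\tau:A\to\mathbb{N}$. $N$ is acyclic if $D$ has no directed cycle. $d^-_A(v)$ is the number of arcs entering $v$. For $i\in\mathbb{N}$, $\rho_N^i(v)=\{a \text{ entering } v:\tau(a)\le i\}$ and $\delta_N^i(v)=\{a\text{ leaving } v:\tau(a)\le i\}$. An $s$-arborescence is an acyclic subgraph $F=(V'\cup\{s\},A')$ with $V'\subseteq V$ in which every vertex of $V'$ has in-degree exactly $1$ (it need not span $V$). A directed path with arcs $a_1,\dots,a_\ell$ in order is $\tau$-respecting if $\tau(a_1)\le\tau(a_2)\le\dots\le\tau(a_\ell)$; an $s$-arborescence is $\tau$-respecting if for each of its vertices $v$ the unique $(s,v)$-path in it is $\tau$-respecting. *)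

theory Defs
  imports Main
begin

text \<open>A directed multigraph is given by a set of arcs A of an arbitrary type 'e
  together with tail and head maps; parallel arcs are distinct elements of A.\<close>

definition arc_rel :: "('e \<Rightarrow> 'v) \<Rightarrow> ('e \<Rightarrow> 'v) \<Rightarrow> 'e set \<Rightarrow> ('v \<times> 'v) set" where
  "arc_rel tail head A = {(tail a, head a) | a. a \<in> A}"

definition temporal_network ::
  "'v set \<Rightarrow> 'v \<Rightarrow> 'e set \<Rightarrow> ('e \<Rightarrow> 'v) \<Rightarrow> ('e \<Rightarrow> 'v) \<Rightarrow> bool" where
  "temporal_network V s A tail head \<longleftrightarrow>
     finite V \<and> finite A \<and> s \<notin> V \<and>
     (\<forall>a\<in>A. tail a \<in> V \<union> {s} \<and> head a \<in> V \<union> {s}) \<and>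
     (\<forall>a\<in>A. head a \<noteq> s)"

definition acyclic_arcs :: "('e \<Rightarrow> 'v) \<Rightarrow> ('e \<Rightarrow> 'v) \<Rightarrow> 'e set \<Rightarrow> bool" where
  "acyclic_arcs tail head A \<longleftrightarrow> acyclic (arc_rel tail head A)"

definition in_arcs :: "('e \<Rightarrow> 'v) \<Rightarrow> 'e set \<Rightarrow> 'v \<Rightarrow> 'e set" where
  "in_arcs head A v = {a \<in> A. head a = v}"

definition indeg :: "('e \<Rightarrow> 'v) \<Rightarrow> 'e set \<Rightarrow> 'v \<Rightarrow> nat" where
  "indeg head A v = card (in_arcs head A v)"

definition rho :: "('e \<Rightarrow> 'v) \<Rightarrow> ('e \<Rightarrow> nat) \<Rightarrow> 'e set \<Rightarrow> nat \<Rightarrow> 'v \<Rightarrow> 'e set" where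
  "rho head tau A i v = {a \<in> A. head a = v \<and> tau a \<le> i}"

definition delta :: "('e \<Rightarrow> 'v) \<Rightarrow> ('e \<Rightarrow> nat) \<Rightarrow> 'e set \<Rightarrow> nat \<Rightarrow> 'v \<Rightarrow> 'e set" where
  "delta tail tau A i v = {a \<in> A. tail a = v \<and> tau a \<le> i}"

definition is_path ::
  "('e \<Rightarrow> 'v) \<Rightarrow> ('e \<Rightarrow> 'v) \<Rightarrow> 'e set \<Rightarrow> 'v \<Rightarrow> 'v \<Rightarrow> 'e list \<Rightarrow> bool" where
  "is_path tail head B u v p \<longleftrightarrow>
     set p \<subseteq> B \<and>
     (p = [] \<longrightarrow> u = v) \<and>
     (p \<noteq> [] \<longrightarrow> tail (List.hd p) = u \<and> head (last p) = v) \<and>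
     (\<forall>j. Suc j < length p \<longrightarrow> head (p ! j) = tail (p ! Suc j)) \<and>
     distinct (u # map head p)"

definition tau_respecting_path :: "('e \<Rightarrow> nat) \<Rightarrow> 'e list \<Rightarrow> bool" where
  "tau_respecting_path tau p \<longleftrightarrow> sorted (map tau p)"

definition s_arborescence ::
  "'v set \<Rightarrow> 'v \<Rightarrow> 'e set \<Rightarrow> ('e \<Rightarrow> 'v) \<Rightarrow> ('e \<Rightarrow> 'v) \<Rightarrow> 'v set \<Rightarrow> 'e set \<Rightarrow> bool" where
  "s_arborescence V s A tail head V' B \<longleftrightarrow>
     V' \<subseteq> V \<and> B \<subseteq> A \<and>
     (\<forall>a\<in>B. tail a \<in> V' \<union> {s} \<and> head a \<in> V' \<union> {s}) \<and>
     acyclic_arcs tail head B \<and>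
     (\<forall>v\<in>V'. card (in_arcs head B v) = 1)"

definition tau_respecting_arborescence ::
  "'v set \<Rightarrow> 'v \<Rightarrow> 'e set \<Rightarrow> ('e \<Rightarrow> 'v) \<Rightarrow> ('e \<Rightarrow> 'v) \<Rightarrow> ('e \<Rightarrow> nat) \<Rightarrow> 'v set \<Rightarrow> 'e set \<Rightarrow> bool" where
  "tau_respecting_arborescence V s A tail head tau V' B \<longleftrightarrow>
     s_arborescence V s A tail head V' B \<and>
     (\<forall>v \<in> V' \<union> {s}. \<forall>p. is_path tail head B s v p \<longrightarrow> tau_respecting_path tau p)"

end

theory Submission
  imports Defs
begin

text \<open>Colour some of the arcs with colours 0, ..., k - 1 so that every vertex v receives
  min(k, d^-(v)) distinct colours on its entering arcs, and every coloured arc leaving a vertex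
  other than s is preceded by an arc of the same colour entering that vertex no later in time.
  The colour classes are then the required arborescences.
  Such a colouring is built along a topological order: take a vertex w all of whose entering arcs
  leave s, contract w into s and colour the rest. For each colour j on the arcs leaving w, the
  earliest of them is a deadline by which an arc entering w must carry colour j; the degree
  condition at w is precisely the counting condition under which a greedy assignment of colours
  to the arcs entering w meets all these deadlines.\<close>

lemma deadline_condition_Diff:
  fixes tau :: "'e \<Rightarrow> 'a::linorder" and D :: "'j \<Rightarrow> 'a"
  assumes "finite I" "finite J"
    and "\<And>t. card {j\<in>J. D j \<le> t} \<le> card {b\<in>I. tau b \<le> t}"
    and "j0 \<in> J" "\<And>j. j \<in> J \<Longrightarrow> D j0 \<le> D j" and "b0 \<in> I" "tau b0 \<le> D j0"
  shows "card {j\<in>J - {j0}. D j \<le> t} \<le> card {b\<in>I - {b0}. tau b \<le> t}"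
proof (cases "D j0 \<le> t")
  case True
  have "{j\<in>J - {j0}. D j \<le> t} = {j\<in>J. D j \<le> t} - {j0}"
    and "{b\<in>I - {b0}. tau b \<le> t} = {b\<in>I. tau b \<le> t} - {b0}" by auto
  with True assms show ?thesis
    by (simp add: card_Diff_singleton diff_le_mono)
next
  case False
  then have "{j\<in>J - {j0}. D j \<le> t} = {}"
    using assms(5) order_trans by blast
  then show ?thesis by (metis card.empty zero_le)
qed

lemma deadline_matching:
  fixes tau :: "'e \<Rightarrow> 'a::linorder" and D :: "'j \<Rightarrow> 'a"
  assumes "finite I" "finite J"
    and "\<And>t. card {j\<in>J. D j \<le> t} \<le> card {b\<in>I. tau b \<le> t}"
  shows "\<exists>f. inj_on f J \<and> f ` J \<subseteq> I \<and> (\<forall>j\<in>J. tau (f j) \<le> D j)"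
  using assms
proof (induction "card J" arbitrary: I J rule: less_induct)
  case less
  show ?case
  proof (cases "J = {}")
    case True
    then show ?thesis by simp
  next
    case False
    \<comment> \<open>Serve the earliest deadline first: any element available by then can take it.\<close>
    define j0 where "j0 = arg_min_on D J"
    have j0: "j0 \<in> J" "\<And>j. j \<in> J \<Longrightarrow> D j0 \<le> D j"
      unfolding j0_def using arg_min_if_finite(1)[OF less.prems(2) False] arg_min_least[OF less.prems(2) False]
      by auto
    have "card {j\<in>J. D j \<le> D j0} \<noteq> 0"
      using j0(1) less.prems(2) by auto
    then have "card {b\<in>I. tau b \<le> D j0} \<noteq> 0"
      using less.prems(3)[of "D j0"] by linarith
    then obtain b0 where b0: "b0 \<in> I" "tau b0 \<le> D j0"
      by (metis (no_types, lifting) card.empty empty_Collect_eq)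
    have "card {j\<in>J - {j0}. D j \<le> t} \<le> card {b\<in>I - {b0}. tau b \<le> t}" for t
      using deadline_condition_Diff[OF less.prems(1,2) less.prems(3) j0 b0] .
    moreover have "card (J - {j0}) < card J"
      using less.prems(2) j0(1) by (rule card_Diff1_less)
    ultimately obtain f where f: "inj_on f (J - {j0})" "f ` (J - {j0}) \<subseteq> I - {b0}"
      "\<forall>j\<in>J - {j0}. tau (f j) \<le> D j"
      using less.hyps[of "J - {j0}" "I - {b0}"] less.prems(1,2) by blast
    have "inj_on (f(j0 := b0)) (J - {j0})"
      using f(1,2) by (blast intro: inj_on_fun_updI)
    then have "inj_on (f(j0 := b0)) J"
      using f(2) j0(1) inj_on_insert[of "f(j0 := b0)" j0 "J - {j0}"]
      by (auto simp: insert_absorb)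
    then show ?thesis
      using f(2,3) b0 by (intro exI[of _ "f(j0 := b0)"]) auto
  qed
qed

lemma inj_on_extend:
  assumes "inj_on f J" "f ` J \<subseteq> I" "J \<subseteq> C" "finite C" "finite I" "card C \<le> card I"
  shows "\<exists>g. inj_on g C \<and> g ` C \<subseteq> I \<and> (\<forall>j\<in>J. g j = f j)"
proof -
  have "card (C - J) = card C - card J"
    using assms(3,4) by (simp add: card_Diff_subset finite_subset)
  also have "\<dots> \<le> card I - card (f ` J)"
    using assms(1,6) by (simp add: card_image)
  also have "\<dots> = card (I - f ` J)"
    using assms(2,5) by (simp add: card_Diff_subset finite_subset)
  finally obtain h where h: "h ` (C - J) \<subseteq> I - f ` J" "inj_on h (C - J)"
    using card_le_inj assms(4,5) by (metis finite_Diff)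
  define g where "g j = (if j \<in> J then f j else h j)" for j
  have "inj_on g (J \<union> (C - J))"
    unfolding inj_on_Un using assms(1) h unfolding g_def inj_on_def by auto
  moreover have "J \<union> (C - J) = C" using assms(3) by blast
  ultimately show ?thesis
    using assms(2) h by (intro exI[of _ g]) (auto simp: g_def)
qed

text \<open>A partial colouring: \<open>L b = None\<close> means that b is uncoloured.\<close>

definition saturated_colouring :: "nat \<Rightarrow> ('e \<Rightarrow> nat option) \<Rightarrow> 'e set \<Rightarrow> bool" where
  "saturated_colouring k L I \<longleftrightarrow>
     (\<forall>b\<in>I. \<forall>j. L b = Some j \<longrightarrow> j < k) \<and>
     inj_on L {b\<in>I. L b \<noteq> None} \<and> card {b\<in>I. L b \<noteq> None} = min k (card I)"

lemma saturated_colouring_cong: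
  assumes "\<And>b. b \<in> I \<Longrightarrow> L b = L' b"
  shows "saturated_colouring k L I \<longleftrightarrow> saturated_colouring k L' I"
proof -
  have "{b\<in>I. L b \<noteq> None} = {b\<in>I. L' b \<noteq> None}"
    using assms by auto
  moreover have "inj_on L {b\<in>I. L' b \<noteq> None} \<longleftrightarrow> inj_on L' {b\<in>I. L' b \<noteq> None}"
    using assms by (intro inj_on_cong) auto
  ultimately show ?thesis
    using assms unfolding saturated_colouring_def by auto
qed

lemma saturated_colouring_unique:
  assumes "saturated_colouring k L I" "a \<in> I" "b \<in> I" "L a = Some j" "L b = Some j"
  shows "a = b"
  using assms unfolding saturated_colouring_def inj_on_def by auto

lemma card_saturated_colours:
  assumes "saturated_colouring k L I"
  shows "card {j. \<exists>a\<in>I. L a = Some j} = min k (card I)"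
proof -
  let ?S = "{a\<in>I. L a \<noteq> None}"
  have "{j. \<exists>a\<in>I. L a = Some j} = (\<lambda>a. the (L a)) ` ?S"
    by force
  moreover have "inj_on (\<lambda>a. the (L a)) ?S"
    using assms unfolding saturated_colouring_def inj_on_def by (metis (mono_tags) mem_Collect_eq option.expand)
  ultimately show ?thesis
    using assms unfolding saturated_colouring_def by (simp add: card_image)
qed

lemma saturated_colouring_with_deadlines:
  fixes tau :: "'e \<Rightarrow> 'a::linorder" and D :: "nat \<Rightarrow> 'a"
  assumes "finite I" "J \<subseteq> {..<k}"
    and "\<And>t. card {j\<in>J. D j \<le> t} \<le> card {b\<in>I. tau b \<le> t}"
  shows "\<exists>L. saturated_colouring k L I \<and> (\<forall>j\<in>J. \<exists>b\<in>I. L b = Some j \<and> tau b \<le> D j)"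
proof -
  have fJ: "finite J" using assms(2) finite_subset by blast
  obtain f where f: "inj_on f J" "f ` J \<subseteq> I" "\<forall>j\<in>J. tau (f j) \<le> D j"
    using deadline_matching[OF assms(1) fJ assms(3)] by blast
  have "card J \<le> card I"
    using f(1,2) assms(1) by (metis card_image card_mono)
  moreover have "card J \<le> k"
    using assms(2) by (metis card_lessThan card_mono finite_lessThan)
  ultimately have "min k (card I) - card J \<le> card ({..<k} - J)"
    using assms(2) fJ by (simp add: card_Diff_subset)
  then obtain E where E: "E \<subseteq> {..<k} - J" "card E = min k (card I) - card J" "finite E"
    by (rule obtain_subset_with_card_n)
  define C where "C = J \<union> E"
  have C: "J \<subseteq> C" "C \<subseteq> {..<k}" "finite C"
    unfolding C_def using E assms(2) fJ by auto
  have "J \<inter> E = {}"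
    using E(1) by blast
  then have "card C = min k (card I)"
    unfolding C_def using card_Un_disjoint[OF fJ E(3)] E(2) \<open>card J \<le> k\<close> \<open>card J \<le> card I\<close>
    by simp
  obtain g where g: "inj_on g C" "g ` C \<subseteq> I" "\<forall>j\<in>J. g j = f j"
    using inj_on_extend[OF f(1,2) C(1,3) assms(1)] \<open>card C = min k (card I)\<close> by auto
  define L where "L b = (if b \<in> g ` C then Some (inv_into C g b) else None)" for b
  have labelled: "{b\<in>I. L b \<noteq> None} = g ` C"
    using g(2) unfolding L_def by auto
  have "saturated_colouring k L I"
    unfolding saturated_colouring_def labelled
  proof (intro conjI ballI allI impI)
    show "j < k" if "b \<in> I" "L b = Some j" for b j
      using that C(2) inv_into_into[of b g C] unfolding L_def by (auto split: if_splits)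
    show "inj_on L (g ` C)"
      using inj_on_inv_into[of "g ` C" g C] unfolding L_def inj_on_def by auto
    show "card (g ` C) = min k (card I)"
      using g(1) \<open>card C = min k (card I)\<close> by (simp add: card_image)
  qed
  moreover have "L (f j) = Some j" if "j \<in> J" for j
    using that g C(1) unfolding L_def by (metis image_eqI inv_into_f_f subsetD)
  ultimately show ?thesis
    using f by blast
qed

definition temporal_colouring ::
  "nat \<Rightarrow> 'v \<Rightarrow> 'e set \<Rightarrow> ('e \<Rightarrow> 'v) \<Rightarrow> ('e \<Rightarrow> 'v) \<Rightarrow> ('e \<Rightarrow> nat) \<Rightarrow> ('e \<Rightarrow> nat option) \<Rightarrow> bool"
where
  "temporal_colouring k s A tail head tau L \<longleftrightarrow>
     (\<forall>v. saturated_colouring k L (in_arcs head A v)) \<and>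
     (\<forall>a\<in>A. \<forall>j. L a = Some j \<longrightarrow> tail a \<noteq> s \<longrightarrow>
        (\<exists>b\<in>in_arcs head A (tail a). L b = Some j \<and> tau b \<le> tau a))"

lemma card_colours_departed_by_le:
  fixes tau :: "'e \<Rightarrow> 'a::linorder"
  assumes "finite X" "\<forall>a\<in>X. \<forall>j. L a = Some j \<longrightarrow> j < k"
  shows "card {j. (\<exists>a\<in>X. L a = Some j) \<and> Min (tau ` {a\<in>X. L a = Some j}) \<le> t}
           \<le> min k (card {a\<in>X. tau a \<le> t})"
proof -
  let ?C = "{j. \<exists>a\<in>X. L a = Some j \<and> tau a \<le> t}"
  have "Min (tau ` {a\<in>X. L a = Some j}) \<le> t \<longleftrightarrow> (\<exists>a\<in>X. L a = Some j \<and> tau a \<le> t)"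
    if "\<exists>a\<in>X. L a = Some j" for j
    using that assms(1) by (subst Min_le_iff) auto
  then have departed: "{j. (\<exists>a\<in>X. L a = Some j) \<and> Min (tau ` {a\<in>X. L a = Some j}) \<le> t} = ?C"
    by blast
  have "?C \<subseteq> (\<lambda>a. the (L a)) ` {a\<in>X. tau a \<le> t}"
    by force
  then have "card ?C \<le> card ((\<lambda>a. the (L a)) ` {a\<in>X. tau a \<le> t})"
    using assms(1) by (intro card_mono) auto
  also have "\<dots> \<le> card {a\<in>X. tau a \<le> t}"
    using assms(1) by (intro card_image_le) auto
  finally have "card ?C \<le> card {a\<in>X. tau a \<le> t}" .
  moreover have "?C \<subseteq> {..<k}"
    using assms(2) by auto
  then have "card ?C \<le> k"
    using card_mono[of "{..<k}" ?C] by simp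
  ultimately show ?thesis
    unfolding departed by simp
qed

lemma in_colouring_meets_departures:
  assumes fin: "finite A"
    and out_colours: "\<forall>a\<in>A. \<forall>j. tail a = w \<longrightarrow> L' a = Some j \<longrightarrow> j < k"
    and deg: "\<And>i. min k (card (delta tail tau A i w)) \<le> min k (card (rho head tau A i w))"
  shows "\<exists>g. saturated_colouring k g (in_arcs head A w) \<and>
           (\<forall>a\<in>A. \<forall>j. tail a = w \<longrightarrow> L' a = Some j \<longrightarrow>
              (\<exists>b\<in>in_arcs head A w. g b = Some j \<and> tau b \<le> tau a))"
proof -
  define Out where "Out = {a\<in>A. tail a = w}"
  define J where "J = {j. \<exists>a\<in>Out. L' a = Some j}"
  define D where "D j = Min (tau ` {a\<in>Out. L' a = Some j})" for j
  have fin_Out: "finite Out"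
    using fin by (simp add: Out_def)
  have "card {j\<in>J. D j \<le> t} \<le> card {b\<in>in_arcs head A w. tau b \<le> t}" for t
  proof -
    have "{a\<in>Out. tau a \<le> t} = delta tail tau A t w"
      by (auto simp: Out_def delta_def)
    then have "card {j\<in>J. D j \<le> t} \<le> min k (card (delta tail tau A t w))"
      using card_colours_departed_by_le[of Out L' k tau t] fin_Out out_colours
      unfolding J_def D_def Out_def by auto
    also have "\<dots> \<le> card (rho head tau A t w)"
      using deg[of t] by simp
    also have "\<dots> = card {b\<in>in_arcs head A w. tau b \<le> t}"
      by (rule arg_cong[where f = card]) (auto simp: rho_def in_arcs_def)
    finally show ?thesis .
  qed
  moreover have "J \<subseteq> {..<k}"
    using out_colours unfolding J_def Out_def by auto
  ultimately obtain g where g: "saturated_colouring k g (in_arcs head A w)"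
    "\<forall>j\<in>J. \<exists>b\<in>in_arcs head A w. g b = Some j \<and> tau b \<le> D j"
    using saturated_colouring_with_deadlines[of "in_arcs head A w" J k D tau] fin
    by (auto simp: in_arcs_def)
  have departure: "j \<in> J \<and> D j \<le> tau a" if "a \<in> A" "tail a = w" "L' a = Some j" for a j
  proof
    show "j \<in> J"
      using that unfolding J_def Out_def by auto
    show "D j \<le> tau a"
      unfolding D_def using that fin by (intro Min_le) (auto simp: Out_def)
  qed
  show ?thesis
  proof (intro exI[of _ g] conjI ballI allI impI)
    show "saturated_colouring k g (in_arcs head A w)"
      by (rule g(1))
    fix a j assume "a \<in> A" "tail a = w" "L' a = Some j"
    then have "j \<in> J" "D j \<le> tau a"
      using departure by blast+
    then obtain b where "b \<in> in_arcs head A w" "g b = Some j" "tau b \<le> D j"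
      using g(2) by blast
    with \<open>D j \<le> tau a\<close> show "\<exists>b\<in>in_arcs head A w. g b = Some j \<and> tau b \<le> tau a"
      using order_trans by blast
  qed
qed

lemma temporal_colouring_glue:
  assumes source: "\<And>a. a \<in> A \<Longrightarrow> head a = w \<Longrightarrow> tail a = s"
    and "temporal_colouring k s {a\<in>A. head a \<noteq> w} (\<lambda>a. if tail a = w then s else tail a) head tau L'"
    and g: "saturated_colouring k g (in_arcs head A w)"
    and arrival: "\<forall>a\<in>A. \<forall>j. tail a = w \<longrightarrow> L' a = Some j \<longrightarrow>
                    (\<exists>b\<in>in_arcs head A w. g b = Some j \<and> tau b \<le> tau a)"
  shows "temporal_colouring k s A tail head tau (\<lambda>a. if head a = w then g a else L' a)"
proof -
  define A' where "A' = {a\<in>A. head a \<noteq> w}"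
  define L where "L a = (if head a = w then g a else L' a)" for a
  have L': "\<And>v. saturated_colouring k L' (in_arcs head A' v)"
    and pred': "\<And>a j. a \<in> A' \<Longrightarrow> L' a = Some j \<Longrightarrow> tail a \<noteq> w \<Longrightarrow> tail a \<noteq> s \<Longrightarrow>
                  \<exists>b\<in>in_arcs head A' (tail a). L' b = Some j \<and> tau b \<le> tau a"
    using assms(2) unfolding temporal_colouring_def A'_def by auto
  have "saturated_colouring k L (in_arcs head A v)" for v
  proof (cases "v = w")
    case True
    then show ?thesis
      using g by (subst saturated_colouring_cong[of _ _ g]) (auto simp: L_def in_arcs_def)
  next
    case False
    then have "in_arcs head A v = in_arcs head A' v"
      by (auto simp: in_arcs_def A'_def)
    then show ?thesis
      using L' False by (subst saturated_colouring_cong[of _ _ L']) (auto simp: L_def in_arcs_def)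
  qed
  moreover have "\<exists>b\<in>in_arcs head A (tail a). L b = Some j \<and> tau b \<le> tau a"
    if a: "a \<in> A" "L a = Some j" "tail a \<noteq> s" for a j
  proof -
    have "head a \<noteq> w" using source a by blast
    then have "a \<in> A'" and L'a: "L' a = Some j"
      using a by (auto simp: A'_def L_def)
    show ?thesis
    proof (cases "tail a = w")
      case True
      then show ?thesis
        using arrival a(1) L'a by (auto simp: L_def in_arcs_def)
    next
      case False
      then obtain b where "b \<in> in_arcs head A' (tail a)" "L' b = Some j" "tau b \<le> tau a"
        using pred'[OF \<open>a \<in> A'\<close> L'a] a(3) by blast
      then show ?thesis
        by (auto simp: L_def in_arcs_def A'_def)
    qed
  qed
  ultimately show ?thesis
    unfolding temporal_colouring_def L_def by blast
qed

lemma temporal_colouring_extend: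
  assumes fin: "finite A"
    and source: "\<And>a. a \<in> A \<Longrightarrow> head a = w \<Longrightarrow> tail a = s" and "w \<noteq> s"
    and deg: "\<And>i. min k (card (delta tail tau A i w)) \<le> min k (card (rho head tau A i w))"
    and L': "temporal_colouring k s {a\<in>A. head a \<noteq> w} (\<lambda>a. if tail a = w then s else tail a) head tau L'"
  shows "\<exists>L. temporal_colouring k s A tail head tau L"
proof -
  have "j < k" if "a \<in> A" "tail a = w" "L' a = Some j" for a j
  proof -
    have "a \<in> in_arcs head {a\<in>A. head a \<noteq> w} (head a)"
      using that source \<open>w \<noteq> s\<close> unfolding in_arcs_def by auto
    then show ?thesis
      using L' that(3) unfolding temporal_colouring_def saturated_colouring_def by blast
  qed
  then have out_colours: "\<forall>a\<in>A. \<forall>j. tail a = w \<longrightarrow> L' a = Some j \<longrightarrow> j < k"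
    by blast
  obtain g where "saturated_colouring k g (in_arcs head A w)"
    and "\<forall>a\<in>A. \<forall>j. tail a = w \<longrightarrow> L' a = Some j \<longrightarrow>
           (\<exists>b\<in>in_arcs head A w. g b = Some j \<and> tau b \<le> tau a)"
    using in_colouring_meets_departures[OF fin out_colours deg] by blast
  then show ?thesis
    using temporal_colouring_glue[OF source L'] by blast
qed

lemma exists_source_vertex:
  assumes "temporal_network V s A tail head" "wf {(tail a, head a) | a. a \<in> A \<and> tail a \<noteq> s}"
    and "V \<noteq> {}"
  obtains w where "w \<in> V" "\<And>a. a \<in> A \<Longrightarrow> head a = w \<Longrightarrow> tail a = s"
proof -
  obtain v where "v \<in> V"
    using assms(3) by blast
  then obtain w where "w \<in> V" and minimal: "\<forall>y. (y, w) \<in> {(tail a, head a) | a. a \<in> A \<and> tail a \<noteq> s} \<longrightarrow> y \<notin> V"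
    using wf_eq_minimal[THEN iffD1, OF assms(2), rule_format, of v V] by blast
  have "tail a = s" if "a \<in> A" "head a = w" for a
  proof (rule ccontr)
    assume "tail a \<noteq> s"
    then have "tail a \<notin> V"
      using minimal that by blast
    with \<open>tail a \<noteq> s\<close> show False
      using assms(1) that(1) unfolding temporal_network_def by blast
  qed
  with \<open>w \<in> V\<close> show ?thesis
    by (rule that)
qed

lemma temporal_network_contract:
  assumes "temporal_network V s A tail head" "w \<in> V"
  shows "temporal_network (V - {w}) s {a\<in>A. head a \<noteq> w} (\<lambda>a. if tail a = w then s else tail a) head"
  using assms unfolding temporal_network_def by auto

lemma degree_condition_contract:
  assumes "finite A" "v \<noteq> w" "v \<noteq> s"
    and "min k (card (delta tail tau A i v)) \<le> min k (card (rho head tau A i v))"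
  shows "min k (card (delta (\<lambda>a. if tail a = w then s else tail a) tau {a\<in>A. head a \<noteq> w} i v))
           \<le> min k (card (rho head tau {a\<in>A. head a \<noteq> w} i v))"
proof -
  have "delta (\<lambda>a. if tail a = w then s else tail a) tau {a\<in>A. head a \<noteq> w} i v
          \<subseteq> delta tail tau A i v"
    using assms(2,3) by (auto simp: delta_def)
  then have "card (delta (\<lambda>a. if tail a = w then s else tail a) tau {a\<in>A. head a \<noteq> w} i v)
               \<le> card (delta tail tau A i v)"
    using assms(1) by (intro card_mono) (auto simp: delta_def)
  moreover have "rho head tau {a\<in>A. head a \<noteq> w} i v = rho head tau A i v"
    using assms(2) by (auto simp: rho_def)
  ultimately show ?thesis
    using assms(4) by auto
qed

text \<open>Arcs leaving s are left out of the well-founded relation, so that it stays well-founded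
  when a vertex is contracted into s.\<close>

lemma temporal_colouring_exists:
  assumes "temporal_network V s A tail head"
    and "wf {(tail a, head a) | a. a \<in> A \<and> tail a \<noteq> s}"
    and "\<And>i v. v \<in> V \<Longrightarrow> min k (card (delta tail tau A i v)) \<le> min k (card (rho head tau A i v))"
  shows "\<exists>L. temporal_colouring k s A tail head tau L"
  using assms
proof (induction "card V" arbitrary: V A tail rule: less_induct)
  case less
  have fin: "finite V" "finite A" and "s \<notin> V"
    using less.prems(1) unfolding temporal_network_def by auto
  show ?case
  proof (cases "V = {}")
    case True
    then have "A = {}"
      using less.prems(1) unfolding temporal_network_def by auto
    then show ?thesis
      by (intro exI[of _ "\<lambda>_. None"])
        (simp add: temporal_colouring_def saturated_colouring_def in_arcs_def)
  next
    case False
    obtain w where "w \<in> V" and source: "\<And>a. a \<in> A \<Longrightarrow> head a = w \<Longrightarrow> tail a = s"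
      using exists_source_vertex[OF less.prems(1,2) False] by metis
    define A' where "A' = {a\<in>A. head a \<noteq> w}"
    define tail' where "tail' = (\<lambda>a. if tail a = w then s else tail a)"
    have "card (V - {w}) < card V"
      using fin(1) \<open>w \<in> V\<close> by (rule card_Diff1_less)
    moreover have "temporal_network (V - {w}) s A' tail' head"
      unfolding A'_def tail'_def using less.prems(1) \<open>w \<in> V\<close> by (rule temporal_network_contract)
    moreover have "wf {(tail' a, head a) | a. a \<in> A' \<and> tail' a \<noteq> s}"
      by (rule wf_subset[OF less.prems(2)]) (auto simp: A'_def tail'_def)
    moreover have "min k (card (delta tail' tau A' i v)) \<le> min k (card (rho head tau A' i v))"
      if "v \<in> V - {w}" for i v
      unfolding A'_def tail'_def using that \<open>s \<notin> V\<close>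
      by (intro degree_condition_contract fin(2) less.prems(3)) auto
    ultimately obtain L' where L': "temporal_colouring k s A' tail' head tau L'"
      using less.hyps[of "V - {w}" A' tail'] by blast
    have "w \<noteq> s"
      using \<open>w \<in> V\<close> \<open>s \<notin> V\<close> by blast
    show ?thesis
      by (rule temporal_colouring_extend[OF fin(2) source \<open>w \<noteq> s\<close> less.prems(3)[OF \<open>w \<in> V\<close>]
            L'[unfolded A'_def tail'_def]])
  qed
qed

lemma temporal_colouring_in_arc_unique:
  assumes "temporal_colouring k s A tail head tau L" "a \<in> A" "b \<in> A" "head a = head b"
    and "L a = Some j" "L b = Some j"
  shows "a = b"
  using assms saturated_colouring_unique[of k L "in_arcs head A (head a)" a b j]
  unfolding temporal_colouring_def in_arcs_def by auto

lemma temporal_colouring_predecessor: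
  assumes "temporal_colouring k s A tail head tau L" "a \<in> A" "L a = Some j" "tail a \<noteq> s"
  obtains b where "b \<in> A" "head b = tail a" "L b = Some j" "tau b \<le> tau a"
  using assms unfolding temporal_colouring_def in_arcs_def by blast

lemma colour_class_path_tau_respecting:
  assumes "\<forall>a\<in>A. head a \<noteq> s" and col: "temporal_colouring k s A tail head tau L"
    and path: "is_path tail head {a\<in>A. L a = Some j} s v p"
  shows "tau_respecting_path tau p"
  unfolding tau_respecting_path_def sorted_iff_nth_Suc
proof (intro allI impI)
  fix m assume "Suc m < length (map tau p)"
  then have m: "Suc m < length p" by simp
  have "set p \<subseteq> {a\<in>A. L a = Some j}" and link: "head (p ! m) = tail (p ! Suc m)"
    using path m unfolding is_path_def by auto
  moreover have "p ! m \<in> set p" "p ! Suc m \<in> set p"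
    using m by simp_all
  ultimately have prev: "p ! m \<in> A" "L (p ! m) = Some j" and later: "p ! Suc m \<in> A" "L (p ! Suc m) = Some j"
    by auto
  have "tail (p ! Suc m) \<noteq> s"
    using link prev(1) assms(1) by auto
  then obtain b where "b \<in> A" "head b = tail (p ! Suc m)" "L b = Some j" "tau b \<le> tau (p ! Suc m)"
    using temporal_colouring_predecessor[OF col later] by blast
  moreover have "b = p ! m"
    using temporal_colouring_in_arc_unique[OF col \<open>b \<in> A\<close> prev(1) _ \<open>L b = Some j\<close> prev(2)]
      \<open>head b = tail (p ! Suc m)\<close> link by simp
  ultimately show "map tau p ! m \<le> map tau p ! Suc m"
    using m by simp
qed

lemma colour_class_tau_respecting_arborescence:
  assumes net: "temporal_network V s A tail head" and acyc: "acyclic_arcs tail head A"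
    and col: "temporal_colouring k s A tail head tau L"
  shows "tau_respecting_arborescence V s A tail head tau
           {head a | a. a \<in> A \<and> L a = Some j} {a\<in>A. L a = Some j}"
proof -
  let ?V' = "{head a | a. a \<in> A \<and> L a = Some j}" and ?B = "{a\<in>A. L a = Some j}"
  have heads: "\<forall>a\<in>A. head a \<in> V \<and> head a \<noteq> s"
    using net unfolding temporal_network_def by blast
  have "s_arborescence V s A tail head ?V' ?B"
    unfolding s_arborescence_def
  proof (intro conjI ballI)
    show "?V' \<subseteq> V" using heads by blast
    show "tail a \<in> ?V' \<union> {s}" if a: "a \<in> ?B" for a
    proof (cases "tail a = s")
      case False
      then obtain b where "b \<in> A" "head b = tail a" "L b = Some j"
        using temporal_colouring_predecessor[OF col] a by blast
      then show ?thesis by (metis (mono_tags, lifting) UnI1 mem_Collect_eq)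
    qed simp
    show "head a \<in> ?V' \<union> {s}" if "a \<in> ?B" for a
      using that by blast
    show "acyclic_arcs tail head ?B"
      using acyc unfolding acyclic_arcs_def arc_rel_def by (rule acyclic_subset) blast
    show "card (in_arcs head ?B v) = 1" if "v \<in> ?V'" for v
    proof -
      obtain a where "a \<in> ?B" "head a = v" using \<open>v \<in> ?V'\<close> by blast
      then have "in_arcs head ?B v = {a}"
        using temporal_colouring_in_arc_unique[OF col] unfolding in_arcs_def by blast
      then show ?thesis by simp
    qed
  qed auto
  moreover have "tau_respecting_path tau p" if "is_path tail head ?B s v p" for v p
    using heads col that by (intro colour_class_path_tau_respecting) auto
  ultimately show ?thesis
    unfolding tau_respecting_arborescence_def by blast
qed

theorem theorem2:
  fixes V :: "'v set" and s :: 'v and A :: "'e set"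
    and tail head :: "'e \<Rightarrow> 'v" and tau :: "'e \<Rightarrow> nat" and k :: nat
  assumes "temporal_network V s A tail head"
    and "acyclic_arcs tail head A"
    and "\<forall>i::nat. \<forall>v\<in>V. min k (card (rho head tau A i v)) \<ge> min k (card (delta tail tau A i v))"
  shows "\<exists>T :: nat \<Rightarrow> 'v set \<times> 'e set.
           (\<forall>j<k. tau_respecting_arborescence V s A tail head tau (fst (T j)) (snd (T j))) \<and>
           (\<forall>j<k. \<forall>l<k. j \<noteq> l \<longrightarrow> snd (T j) \<inter> snd (T l) = {}) \<and>
           (\<forall>v\<in>V. card {j. j < k \<and> v \<in> fst (T j)} = min k (indeg head A v))"
proof -
  have "finite (arc_rel tail head A)"
    using assms(1) unfolding temporal_network_def arc_rel_def by simp
  then have "wf (arc_rel tail head A)"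
    using assms(2) unfolding acyclic_arcs_def by (rule finite_acyclic_wf)
  then have "wf {(tail a, head a) | a. a \<in> A \<and> tail a \<noteq> s}"
    by (rule wf_subset) (auto simp: arc_rel_def)
  then obtain L where L: "temporal_colouring k s A tail head tau L"
    using temporal_colouring_exists[OF assms(1)] assms(3) by blast
  define T where "T j = ({head a | a. a \<in> A \<and> L a = Some j}, {a\<in>A. L a = Some j})" for j
  have colours_at: "{j. j < k \<and> v \<in> fst (T j)} = {j. \<exists>a\<in>in_arcs head A v. L a = Some j}" for v
    using L unfolding T_def temporal_colouring_def saturated_colouring_def in_arcs_def by auto
  show ?thesis
  proof (intro exI[of _ T] conjI allI impI ballI)
    show "tau_respecting_arborescence V s A tail head tau (fst (T j)) (snd (T j))" for j
      unfolding T_def using colour_class_tau_respecting_arborescence[OF assms(1,2) L] by simp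
    show "snd (T j) \<inter> snd (T l) = {}" if "j \<noteq> l" for j l
      unfolding T_def using that by auto
    show "card {j. j < k \<and> v \<in> fst (T j)} = min k (indeg head A v)" for v
      unfolding colours_at indeg_def
      using L card_saturated_colours unfolding temporal_colouring_def by blast
  qed
qed

end
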